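(* Let $k$ be a positive integer and $\mathbb{A}$ an alphabet with exactly $k$ letters. The number of extremal $XYX$-avoiding words over $\mathbb{A}$ is $k!$.
   Context: A word is a finite sequence of letters. A factor of $W$ is a word $U$ with $W=W_1UW_2$ for some (possibly empty) words $W_1,W_2$. A word $W$ contains the pattern $XYX$ if some factor of $W$ can be written as $ABA$ with $A,B$ nonempty words ($A$ and $B$ may be equal); otherwise $W$ avoids $XYX$. An extension of a word $W$ over $\mathbb{A}$ is any word $W_1xW_2$ with $W=W_1W_2$ ($W_1,W_2$ possibly empty) and $x\in\mathbb{A}$. A word over $\mathbb{A}$ is extremal $XYX$-avoiding if it avoids $XYX$ and every extension of it contains $XYX$. *)

theory Defs
  imports Main "HOL-Library.Sublist"
begin

definition contains_XYX :: "'a list \<Rightarrow> bool" where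
  "contains_XYX w \<longleftrightarrow> (\<exists>a b. a \<noteq> [] \<and> b \<noteq> [] \<and> sublist (a @ b @ a) w)"

definition extensions :: "'a set \<Rightarrow> 'a list \<Rightarrow> 'a list set" where
  "extensions A w = {w1 @ [x] @ w2 | w1 w2 x. w = w1 @ w2 \<and> x \<in> A}"

definition extremal_XYX :: "'a set \<Rightarrow> 'a list \<Rightarrow> bool" where
  "extremal_XYX A w \<longleftrightarrow> set w \<subseteq> A \<and> \<not> contains_XYX w
     \<and> (\<forall>v \<in> extensions A w. contains_XYX v)"

end

theory Submission
  imports Defs "HOL-Combinatorics.Multiset_Permutations"
begin

text \<open>A word \<open>x # w\<close> contains \<open>XYX\<close> exactly when \<open>w\<close> does or \<open>x\<close> recurs in \<open>w\<close>
  after a gap; so an \<open>XYX\<close>-free word uses each letter in a single block of length at most 2.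
  Maximality forces every letter of the alphabet to occur twice, since prepending an absent
  letter or doubling a single occurrence keeps the word \<open>XYX\<close>-free, while a third occurrence
  never does. Hence the extremal words are exactly \<open>x\<^sub>1x\<^sub>1x\<^sub>2x\<^sub>2\<dots>x\<^sub>kx\<^sub>k\<close> for the \<open>k!\<close>
  orderings \<open>x\<^sub>1\<dots>x\<^sub>k\<close> of the alphabet.\<close>

lemma prefix_XYX_Cons_iff:
  "(\<exists>a b. a \<noteq> [] \<and> b \<noteq> [] \<and> prefix (a @ b @ a) (x # w)) \<longleftrightarrow> x \<in> set (tl w)"
proof
  assume "\<exists>a b. a \<noteq> [] \<and> b \<noteq> [] \<and> prefix (a @ b @ a) (x # w)"
  then obtain a b r where "a \<noteq> []" "b \<noteq> []" and xw: "a @ b @ a @ r = x # w"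
    by (auto simp: prefix_def)
  then obtain a' b1 b' where "a = x # a'" "b = b1 # b'"
    by (cases a; cases b) auto
  with xw have "tl w = tl (a' @ [b1]) @ b' @ x # a' @ r"
    by (cases a') auto
  then show "x \<in> set (tl w)" by simp
next
  assume "x \<in> set (tl w)"
  then obtain y u v where "w = y # u @ x # v"
    by (cases w) (auto dest: split_list)
  then have "prefix ([x] @ (y # u) @ [x]) (x # w)" by (simp add: prefix_def)
  then show "\<exists>a b. a \<noteq> [] \<and> b \<noteq> [] \<and> prefix (a @ b @ a) (x # w)" by blast
qed

lemma contains_XYX_Nil [simp]: "\<not> contains_XYX []"
  by (auto simp: contains_XYX_def)

lemma contains_XYX_Cons [simp]: "contains_XYX (x # w) \<longleftrightarrow> contains_XYX w \<or> x \<in> set (tl w)"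
  unfolding contains_XYX_def sublist_Cons_right using prefix_XYX_Cons_iff[of x w] by blast

lemma count_list_le_2_if_not_contains_XYX:
  "\<not> contains_XYX w \<Longrightarrow> count_list w a \<le> 2"
proof (induction w)
  case (Cons x w)
  then show ?case
    by (cases "x = a"; cases w) (auto simp: count_list_0_iff)
qed simp

lemma not_contains_XYX_Cons_fresh:
  "\<not> contains_XYX w \<Longrightarrow> a \<notin> set w \<Longrightarrow> \<not> contains_XYX (a # w)"
  by (cases w) auto

lemma not_contains_XYX_double_fresh:
  "\<not> contains_XYX (u @ a # v) \<Longrightarrow> a \<notin> set u \<Longrightarrow> a \<notin> set v \<Longrightarrow> \<not> contains_XYX (u @ a # a # v)"
proof (induction u)
  case (Cons y u)
  have "set (tl (u @ a # a # v)) \<subseteq> insert a (set (tl (u @ a # v)))"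
    by (cases u) auto
  with Cons show ?case by auto
qed simp

lemma extremal_XYX_iff:
  "extremal_XYX A w \<longleftrightarrow> set w \<subseteq> A \<and> \<not> contains_XYX w \<and> (\<forall>a\<in>A. count_list w a = 2)"
proof
  assume ext: "extremal_XYX A w"
  then have avoids: "\<not> contains_XYX w" and maximal: "\<And>v. v \<in> extensions A w \<Longrightarrow> contains_XYX v"
    by (auto simp: extremal_XYX_def)
  have "count_list w a = 2" if "a \<in> A" for a
  proof (rule ccontr)
    assume "count_list w a \<noteq> 2"
    with count_list_le_2_if_not_contains_XYX[OF avoids, of a]
    have "count_list w a = 0 \<or> count_list w a = 1" by linarith
    then consider "a \<notin> set w" | "count_list w a = 1"
      by (auto simp: count_list_0_iff)
    then show False
    proof cases
      case 1
      have "[] @ [a] @ w \<in> extensions A w"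
        using \<open>a \<in> A\<close> unfolding extensions_def by blast
      with 1 show False
        using maximal not_contains_XYX_Cons_fresh[OF avoids] by fastforce
    next
      case 2
      then have "a \<in> set w" by (rule contrapos_pp) simp
      then obtain u v where w: "w = u @ a # v" and "a \<notin> set u"
        by (auto dest: split_list_first)
      with 2 have "a \<notin> set v" by (simp add: count_list_0_iff)
      have "u @ [a] @ a # v \<in> extensions A w"
        using \<open>a \<in> A\<close> w unfolding extensions_def by blast
      then show False
        using maximal not_contains_XYX_double_fresh avoids w \<open>a \<notin> set u\<close> \<open>a \<notin> set v\<close>
        by fastforce
    qed
  qed
  with ext show "set w \<subseteq> A \<and> \<not> contains_XYX w \<and> (\<forall>a\<in>A. count_list w a = 2)"
    by (simp add: extremal_XYX_def)
next
  assume w: "set w \<subseteq> A \<and> \<not> contains_XYX w \<and> (\<forall>a\<in>A. count_list w a = 2)"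
  have "contains_XYX v" if "v \<in> extensions A w" for v
  proof -
    from that obtain w1 w2 x where "v = w1 @ [x] @ w2" "w = w1 @ w2" "x \<in> A"
      by (auto simp: extensions_def)
    with w have "count_list v x = 3" by simp
    then show ?thesis using count_list_le_2_if_not_contains_XYX[of v x] by linarith
  qed
  with w show "extremal_XYX A w" by (simp add: extremal_XYX_def)
qed

fun double_letters :: "'a list \<Rightarrow> 'a list" where
  "double_letters [] = []"
| "double_letters (x # xs) = x # x # double_letters xs"

lemma set_double_letters [simp]: "set (double_letters xs) = set xs"
  by (induction xs) auto

lemma inj_double_letters: "inj double_letters"
proof (rule injI)
  show "double_letters xs = double_letters ys \<Longrightarrow> xs = ys" for xs ys :: "'a list"
  proof (induction xs arbitrary: ys)
    case Nil
    then show ?case by (cases ys) auto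
  next
    case (Cons x xs)
    then show ?case by (cases ys) auto
  qed
qed

lemma not_contains_XYX_double_letters:
  "distinct xs \<Longrightarrow>
     \<not> contains_XYX (double_letters xs) \<and> (\<forall>a\<in>set xs. count_list (double_letters xs) a = 2)"
proof (induction xs)
  case (Cons x xs)
  then show ?case by (cases xs) auto
qed simp

lemma double_letters_if_all_twice:
  "\<not> contains_XYX w \<Longrightarrow> \<forall>a\<in>set w. count_list w a = 2 \<Longrightarrow>
     \<exists>xs. distinct xs \<and> w = double_letters xs"
proof (induction w rule: induct_list012)
  case 1
  have "distinct [] \<and> [] = double_letters []" by simp
  then show ?case by blast
next
  case (2 x)
  then show ?case by simp
next
  case (3 x y zs)
  have "x \<notin> set zs" and "count_list (x # y # zs) x = 2"
    using "3.prems" by auto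
  then have "y = x" by (simp split: if_splits)
  have "\<forall>a\<in>set zs. count_list zs a = 2"
  proof
    fix a assume "a \<in> set zs"
    with \<open>x \<notin> set zs\<close> have "a \<noteq> x" by auto
    with "3.prems"(2) \<open>a \<in> set zs\<close> \<open>y = x\<close> show "count_list zs a = 2" by auto
  qed
  then obtain xs where "distinct xs" "zs = double_letters xs"
    using "3.IH"(1) "3.prems" by auto
  with \<open>y = x\<close> \<open>x \<notin> set zs\<close> show ?case
    by (intro exI[of _ "x # xs"]) auto
qed

lemma extremal_XYX_words_eq: "{w. extremal_XYX A w} = double_letters ` permutations_of_set A"
proof -
  have "extremal_XYX A w \<longleftrightarrow> (\<exists>xs. distinct xs \<and> set xs = A \<and> w = double_letters xs)" for w
  proof -
    have "A \<subseteq> set w" if "\<forall>a\<in>A. count_list w a = 2"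
    proof
      fix a assume "a \<in> A"
      with that have "count_list w a \<noteq> 0" by simp
      then show "a \<in> set w" by (simp add: count_list_0_iff)
    qed
    then have "extremal_XYX A w \<longleftrightarrow> set w = A \<and> \<not> contains_XYX w \<and> (\<forall>a\<in>set w. count_list w a = 2)"
      unfolding extremal_XYX_iff by blast
    also have "\<dots> \<longleftrightarrow> (\<exists>xs. distinct xs \<and> set xs = A \<and> w = double_letters xs)"
    proof
      assume "set w = A \<and> \<not> contains_XYX w \<and> (\<forall>a\<in>set w. count_list w a = 2)"
      with double_letters_if_all_twice[of w] show "\<exists>xs. distinct xs \<and> set xs = A \<and> w = double_letters xs"
        by auto
    next
      assume "\<exists>xs. distinct xs \<and> set xs = A \<and> w = double_letters xs"
      with not_contains_XYX_double_letters
      show "set w = A \<and> \<not> contains_XYX w \<and> (\<forall>a\<in>set w. count_list w a = 2)"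
        by auto
    qed
    finally show ?thesis .
  qed
  then show ?thesis
    by (auto simp: permutations_of_set_def)
qed

theorem mainTheorem3:
  fixes A :: "'a set" and k :: nat
  assumes "finite A" and "card A = k" and "k > 0"
  shows "card {w. extremal_XYX A w} = fact k"
proof -
  have "card {w. extremal_XYX A w} = card (permutations_of_set A)"
    unfolding extremal_XYX_words_eq
    by (rule card_image) (rule inj_on_subset[OF inj_double_letters subset_UNIV])
  also have "\<dots> = fact k"
    using assms(1,2) by (simp add: card_permutations_of_set)
  finally show ?thesis .
qed

end
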